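(* For all integers $n,k,j\ge 0$, \[ \sum_{i=0}^n e_{n,i}^k \binom{n+j-i}{n} = (j+k+1)^n . \]
   Context: For a fixed integer parameter $k$, the numbers $e^k_{n,i}$ are defined by $e^k_{0,0}=1$, $e^k_{n,i}=0$ whenever $i<0$ or $i>n$, and $e^k_{n,i}=(k+i+1)\,e^k_{n-1,i}+(n-k-i)\,e^k_{n-1,i-1}$ for all other integers $n,i$. Binomial coefficients $\binom{a}{n}$ with $0\le a<n$ are $0$. *)

theory Defs
  imports Main
begin

fun e :: "int \<Rightarrow> nat \<Rightarrow> int \<Rightarrow> int" where
  "e k 0 i = (if i = 0 then 1 else 0)"
| "e k (Suc n) i =
     (if i < 0 \<or> i > int (Suc n) then 0
      else (k + i + 1) * e k n i + (int (Suc n) - k - i) * e k n (i - 1))"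

end

(* Unfolding the recurrence for e and shifting the index of its second part turns the sum at
   level n+1 into a sum over e at level n with weights
   (k+i+1) C(m+1, n+1) + (n-k-i) C(m, n+1), where m = n+j-i.  By a weighted Pascal rule these
   weights equal (j+k+1) C(m, n), so each level multiplies the sum by j+k+1. *)
theory Submission
  imports Defs
begin

lemma Suc_times_binomial_Suc_eq: "Suc n * (m choose Suc n) = (m - n) * (m choose n)"
  by (metis binomial_absorb_comp binomial_absorption)

lemma weighted_binomial_Pascal:
  fixes a :: "'a::comm_ring_1"
  shows "a * of_nat (Suc m choose Suc n) + (of_nat (Suc n) - a) * of_nat (m choose Suc n)
       = (a + of_nat m - of_nat n) * of_nat (m choose n)"
proof (cases "n \<le> m")
  case True
  have "of_nat (Suc n) * of_nat (m choose Suc n) = (of_nat m - of_nat n) * (of_nat (m choose n) :: 'a)"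
    using arg_cong[OF Suc_times_binomial_Suc_eq, of "of_nat :: nat \<Rightarrow> 'a"] True
    by (simp only: of_nat_mult of_nat_diff)
  then show ?thesis
    by (simp add: algebra_simps)
qed (simp add: binomial_eq_0)

lemma e_eq_0_if_negative: "i < 0 \<Longrightarrow> e k n i = 0"
  by (cases n) auto

lemma e_eq_0_if_greater: "int n < i \<Longrightarrow> e k n i = 0"
  by (cases n) auto

lemma e_Suc_eq: "e k (Suc n) i = (k + i + 1) * e k n i + (int (Suc n) - k - i) * e k n (i - 1)"
  by (auto simp: e_eq_0_if_negative e_eq_0_if_greater)

lemma sum_e_Suc_times:
  fixes c :: "nat \<Rightarrow> int"
  shows "(\<Sum>i=0..Suc n. e k (Suc n) (int i) * c i)
       = (\<Sum>i=0..n. e k n (int i) * ((k + int i + 1) * c i + (int n - k - int i) * c (Suc i)))"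
proof -
  have "(\<Sum>i=0..Suc n. e k (Suc n) (int i) * c i)
      = (\<Sum>i=0..Suc n. (k + int i + 1) * e k n (int i) * c i)
      + (\<Sum>i=0..Suc n. (int (Suc n) - k - int i) * e k n (int i - 1) * c i)"
    by (simp add: e_Suc_eq sum.distrib[symmetric] algebra_simps)
  also have "(\<Sum>i=0..Suc n. (k + int i + 1) * e k n (int i) * c i)
      = (\<Sum>i=0..n. (k + int i + 1) * e k n (int i) * c i)"
    by (simp add: e_eq_0_if_greater)
  also have "(\<Sum>i=0..Suc n. (int (Suc n) - k - int i) * e k n (int i - 1) * c i)
      = (\<Sum>i=0..n. (int n - k - int i) * e k n (int i) * c (Suc i))"
    by (subst sum.atLeast0_atMost_Suc_shift) (simp add: e_eq_0_if_negative algebra_simps)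
  finally show ?thesis
    by (simp add: sum.distrib[symmetric] algebra_simps)
qed

theorem corollary2p4:
  fixes n k j :: nat
  shows "(\<Sum>i=0..n. e (int k) n (int i) * int ((n + j - i) choose n)) = (int j + int k + 1) ^ n"
proof (induction n)
  case 0
  then show ?case by simp
next
  case (Suc n)
  have weights_eq: "(int k + int i + 1) * int ((Suc n + j - i) choose Suc n)
      + (int n - int k - int i) * int ((Suc n + j - Suc i) choose Suc n)
      = (int j + int k + 1) * int ((n + j - i) choose n)" if "i \<le> n" for i
    using weighted_binomial_Pascal[of "int k + int i + 1" "n + j - i" n] that
    by (simp add: Suc_diff_le algebra_simps)
  have "(\<Sum>i=0..Suc n. e (int k) (Suc n) (int i) * int ((Suc n + j - i) choose Suc n))
      = (\<Sum>i=0..n. e (int k) n (int i) * ((int j + int k + 1) * int ((n + j - i) choose n)))"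
    unfolding sum_e_Suc_times by (intro sum.cong refl) (metis atLeastAtMost_iff weights_eq)
  also have "\<dots> = (int j + int k + 1) ^ Suc n"
    using Suc by (simp add: mult.left_commute[of _ "int j + int k + 1"] sum_distrib_left[symmetric])
  finally show ?case .
qed

end
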